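(* Let $\Gamma_M$ ($M>0$) be a family of nonatomic routing games with a single OD pair with demand $M$, sharing the same graph, path set and edge costs $(c_e)_{e\in\mathcal E}$, where each $c_e$ is a polynomial. Then $\mathrm{PoA}(\Gamma_M)\to 1$ as $M\to 0$.
   Context: A nonatomic routing game with a single OD pair consists of a finite directed multigraph with edge set $\mathcal E$, a nonempty finite set $\mathcal P$ of paths from an origin to a destination, a demand $M>0$, and continuous nondecreasing edge costs $c_e:[0,\infty)\to[0,\infty)$. Feasible flows: $f\in\mathbb R_+^{\mathcal P}$ with $\sum_p f_p=M$; loads $x_e=\sum_{p\ni e}f_p$; path costs $c_p(f)=\sum_{e\in p}c_e(x_e)$. A Wardrop equilibrium is a feasible $f^*$ with $c_p(f^* )\le c_{p'}(f^* )$ whenever $f^*_p>0$. Social cost $L(x)=\sum_e x_ec_e(x_e)$; $\mathrm{Opt}$ is its minimum over feasible loads, $\mathrm{Eq}=L(x^* )$ at an equilibrium load, and $\mathrm{PoA}=\mathrm{Eq}/\mathrm{Opt}$; it is assumed that $\mathrm{Opt}>0$ (otherwise $\mathrm{PoA}:=1$). *)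

theory Defs
  imports "HOL-Computational_Algebra.Polynomial" "HOL-Analysis.Analysis"
begin

text \<open>A single-OD nonatomic routing game: a finite edge set E, a finite nonempty
  path set P, each path p described by its set of edges pe p (a subset of E),
  edge cost functions c e, and a demand M.\<close>

definition feasible_flow :: "'p set \<Rightarrow> real \<Rightarrow> ('p \<Rightarrow> real) \<Rightarrow> bool" where
  "feasible_flow P M f \<longleftrightarrow> (\<forall>p\<in>P. f p \<ge> 0) \<and> (\<Sum>p\<in>P. f p) = M"

definition edge_load :: "'p set \<Rightarrow> ('p \<Rightarrow> 'e set) \<Rightarrow> ('p \<Rightarrow> real) \<Rightarrow> 'e \<Rightarrow> real" where
  "edge_load P pe f e = (\<Sum>p\<in>{p\<in>P. e \<in> pe p}. f p)"

definition path_cost ::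
  "'p set \<Rightarrow> ('p \<Rightarrow> 'e set) \<Rightarrow> ('e \<Rightarrow> real \<Rightarrow> real) \<Rightarrow> ('p \<Rightarrow> real) \<Rightarrow> 'p \<Rightarrow> real" where
  "path_cost P pe c f p = (\<Sum>e\<in>pe p. c e (edge_load P pe f e))"

definition wardrop_eq ::
  "'p set \<Rightarrow> ('p \<Rightarrow> 'e set) \<Rightarrow> ('e \<Rightarrow> real \<Rightarrow> real) \<Rightarrow> real \<Rightarrow> ('p \<Rightarrow> real) \<Rightarrow> bool" where
  "wardrop_eq P pe c M f \<longleftrightarrow> feasible_flow P M f \<and>
     (\<forall>p\<in>P. \<forall>q\<in>P. f p > 0 \<longrightarrow> path_cost P pe c f p \<le> path_cost P pe c f q)"

definition social_cost ::
  "'e set \<Rightarrow> 'p set \<Rightarrow> ('p \<Rightarrow> 'e set) \<Rightarrow> ('e \<Rightarrow> real \<Rightarrow> real) \<Rightarrow> ('p \<Rightarrow> real) \<Rightarrow> real" where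
  "social_cost E P pe c f = (\<Sum>e\<in>E. edge_load P pe f e * c e (edge_load P pe f e))"

definition opt_cost ::
  "'e set \<Rightarrow> 'p set \<Rightarrow> ('p \<Rightarrow> 'e set) \<Rightarrow> ('e \<Rightarrow> real \<Rightarrow> real) \<Rightarrow> real \<Rightarrow> real" where
  "opt_cost E P pe c M = (INF f\<in>{f. feasible_flow P M f}. social_cost E P pe c f)"

definition poa ::
  "'e set \<Rightarrow> 'p set \<Rightarrow> ('p \<Rightarrow> 'e set) \<Rightarrow> ('e \<Rightarrow> real \<Rightarrow> real) \<Rightarrow> real \<Rightarrow> ('p \<Rightarrow> real) \<Rightarrow> real" where
  "poa E P pe c M f = (if opt_cost E P pe c M = 0 then 1
                       else social_cost E P pe c f / opt_cost E P pe c M)"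

end

theory Submission
  imports Defs
begin

text \<open>Near zero every nonzero cost is dominated by its lowest-order term \<open>b\<^sub>e x ^ k\<^sub>e\<close>.
  Let \<open>d\<close> be the largest, over all paths, of the least order of a costly edge on the path.
  At demand \<open>M\<close> the common cost of the used paths is of order \<open>M ^ d\<close>; hence edges of order
  below \<open>d\<close> carry only a small part of the demand, at equilibrium as well as in every flow that
  is at least as cheap, while edges of order above \<open>d\<close> contribute \<open>o(M ^ (d + 1))\<close> to any
  social cost. What remains is the game with the homogeneous costs \<open>b\<^sub>e x ^ d\<close> on the edges of
  order \<open>d\<close>, whose social cost is \<open>d + 1\<close> times its Beckmann potential, so that its equilibria
  are optimal. The variational inequality of the equilibrium and the convexity of
  \<open>x ^ (d + 1)\<close> transfer this to the given game up to a relative error that vanishes with \<open>M\<close>.\<close>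

section \<open>Nonatomic routing games\<close>

lemma feasible_flowD:
  assumes "feasible_flow P M f"
  shows "\<And>p. p \<in> P \<Longrightarrow> 0 \<le> f p" and "(\<Sum>p\<in>P. f p) = M"
  using assms unfolding feasible_flow_def by auto

lemma edge_load_nonneg: "feasible_flow P M f \<Longrightarrow> 0 \<le> edge_load P pe f e"
  unfolding edge_load_def by (auto intro: sum_nonneg dest: feasible_flowD)

lemma edge_load_le_demand:
  assumes "feasible_flow P M f" "finite P"
  shows "edge_load P pe f e \<le> M"
proof -
  have "edge_load P pe f e \<le> (\<Sum>p\<in>P. f p)"
    unfolding edge_load_def using assms by (intro sum_mono2) (auto dest: feasible_flowD)
  with assms(1) show ?thesis by (simp add: feasible_flowD)
qed

lemma sum_edge_load_mult:
  assumes "finite E" "finite P" "\<forall>p\<in>P. pe p \<subseteq> E"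
  shows "(\<Sum>e\<in>E. edge_load P pe g e * h e) = (\<Sum>p\<in>P. g p * (\<Sum>e\<in>pe p. h e))"
proof -
  have "(\<Sum>e\<in>E. edge_load P pe g e * h e) = (\<Sum>e\<in>E. \<Sum>p\<in>P. if e \<in> pe p then g p * h e else 0)"
    unfolding edge_load_def sum.inter_filter[OF \<open>finite P\<close>] sum_distrib_right
    by (intro sum.cong) auto
  also have "\<dots> = (\<Sum>p\<in>P. \<Sum>e\<in>E. if e \<in> pe p then g p * h e else 0)"
    by (rule sum.swap)
  also have "\<dots> = (\<Sum>p\<in>P. g p * (\<Sum>e\<in>pe p. h e))"
  proof (intro sum.cong refl)
    fix p assume "p \<in> P"
    then have "{e\<in>E. e \<in> pe p} = pe p" using assms(3) by auto
    then show "(\<Sum>e\<in>E. if e \<in> pe p then g p * h e else 0) = g p * (\<Sum>e\<in>pe p. h e)"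
      using \<open>finite E\<close> by (simp add: sum.inter_filter[symmetric] sum_distrib_left)
  qed
  finally show ?thesis .
qed

lemma social_cost_eq_sum_path_cost:
  assumes "finite E" "finite P" "\<forall>p\<in>P. pe p \<subseteq> E"
  shows "social_cost E P pe c f = (\<Sum>p\<in>P. f p * path_cost P pe c f p)"
  unfolding social_cost_def path_cost_def by (rule sum_edge_load_mult[OF assms])

lemma social_cost_nonneg:
  assumes "feasible_flow P M f" "\<And>e x. e \<in> E \<Longrightarrow> 0 \<le> x \<Longrightarrow> 0 \<le> c e x"
  shows "0 \<le> social_cost E P pe c f"
  unfolding social_cost_def
  by (intro sum_nonneg mult_nonneg_nonneg assms(2) edge_load_nonneg[OF assms(1)])

lemma wardrop_eq_feasible: "wardrop_eq P pe c M f \<Longrightarrow> feasible_flow P M f"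
  unfolding wardrop_eq_def by simp

lemma wardrop_used_path_cost:
  assumes "wardrop_eq P pe c M f" "finite P" "p \<in> P" "0 < f p"
  shows "path_cost P pe c f p = Min (path_cost P pe c f ` P)"
  using assms unfolding wardrop_eq_def by (intro antisym Min_le Min.boundedI) auto

lemma path_flow_cost_le:
  assumes "finite E" "finite P" "\<forall>p\<in>P. pe p \<subseteq> E" "\<And>p. p \<in> P \<Longrightarrow> 0 \<le> h p"
  shows "(\<Sum>p\<in>P. h p) * Min (path_cost P pe c f ` P)
           \<le> (\<Sum>e\<in>E. edge_load P pe h e * c e (edge_load P pe f e))"
proof -
  have "(\<Sum>p\<in>P. h p) * Min (path_cost P pe c f ` P) \<le> (\<Sum>p\<in>P. h p * path_cost P pe c f p)"
    unfolding sum_distrib_right using assms by (intro sum_mono mult_left_mono Min_le) auto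
  also have "\<dots> = (\<Sum>e\<in>E. edge_load P pe h e * c e (edge_load P pe f e))"
    unfolding path_cost_def by (rule sum_edge_load_mult[symmetric, OF assms(1-3)])
  finally show ?thesis .
qed

lemma wardrop_social_cost:
  assumes "wardrop_eq P pe c M f" "finite E" "finite P" "\<forall>p\<in>P. pe p \<subseteq> E"
  shows "social_cost E P pe c f = M * Min (path_cost P pe c f ` P)"
proof -
  have ff: "feasible_flow P M f" using wardrop_eq_feasible[OF assms(1)] .
  have "f p * path_cost P pe c f p = f p * Min (path_cost P pe c f ` P)" if "p \<in> P" for p
    using wardrop_used_path_cost[OF assms(1,3) that] feasible_flowD(1)[OF ff that]
    by (cases "f p = 0") auto
  then have "social_cost E P pe c f = (\<Sum>p\<in>P. f p * Min (path_cost P pe c f ` P))"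
    unfolding social_cost_eq_sum_path_cost[OF assms(2-4)] by (auto intro: sum.cong)
  then show ?thesis by (simp add: feasible_flowD(2)[OF ff] sum_distrib_right[symmetric])
qed

lemma wardrop_loaded_edge_cost_le:
  assumes "wardrop_eq P pe c M f" "finite E" "finite P" "\<forall>p\<in>P. pe p \<subseteq> E"
    and "\<And>e x. e \<in> E \<Longrightarrow> 0 \<le> x \<Longrightarrow> 0 \<le> c e x"
    and "0 < edge_load P pe f e"
  shows "c e (edge_load P pe f e) \<le> Min (path_cost P pe c f ` P)"
proof -
  have ff: "feasible_flow P M f" using wardrop_eq_feasible[OF assms(1)] .
  obtain p where p: "p \<in> P" "e \<in> pe p" "0 < f p"
    using assms(6) unfolding edge_load_def
    by (metis (mono_tags, lifting) mem_Collect_eq not_less sum_nonpos)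
  have "c e (edge_load P pe f e) \<le> path_cost P pe c f p"
    unfolding path_cost_def using p assms(2,4)
    by (intro member_le_sum assms(5) edge_load_nonneg[OF ff]) (auto intro: finite_subset)
  then show ?thesis using wardrop_used_path_cost[OF assms(1,3) p(1,3)] by simp
qed

lemma exists_path_flow_ge_average:
  assumes "feasible_flow P M f" "finite P" "P \<noteq> {}"
  obtains p where "p \<in> P" "M / card P \<le> f p"
proof -
  have "Max (f ` P) \<in> f ` P" using assms(2,3) by simp
  then obtain p where p: "p \<in> P" "f p = Max (f ` P)" by auto
  have "M \<le> card P * f p"
    unfolding feasible_flowD(2)[OF assms(1), symmetric] p(2) using assms(2)
    by (intro sum_bounded_above) auto
  with p(1) assms(2,3) show ?thesis
    by (intro that[of p]) (auto simp: divide_le_eq card_gt_0_iff mult.commute)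
qed

lemma poa_deviation_le:
  assumes "feasible_flow P M f" "\<And>e x. e \<in> E \<Longrightarrow> 0 \<le> x \<Longrightarrow> 0 \<le> c e x" "0 \<le> r"
    and "\<And>g. feasible_flow P M g \<Longrightarrow> social_cost E P pe c f \<le> (1 + r) * social_cost E P pe c g"
  shows "\<bar>poa E P pe c M f - 1\<bar> \<le> r"
proof -
  let ?Opt = "opt_cost E P pe c M" and ?Eq = "social_cost E P pe c f"
  have bdd: "bdd_below ((social_cost E P pe c) ` {g. feasible_flow P M g})"
    using social_cost_nonneg[OF _ assms(2)] by (intro bdd_belowI[of _ 0]) auto
  have Opt_nonneg: "0 \<le> ?Opt"
    unfolding opt_cost_def using assms(1) social_cost_nonneg[OF _ assms(2)]
    by (intro cINF_greatest) auto
  have Opt_le: "?Opt \<le> ?Eq"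
    unfolding opt_cost_def using assms(1) bdd by (intro cINF_lower) auto
  have "?Eq / (1 + r) \<le> ?Opt"
    unfolding opt_cost_def using assms(1,3,4)
    by (intro cINF_greatest) (auto simp: divide_le_eq mult.commute)
  then have Eq_le: "?Eq \<le> (1 + r) * ?Opt"
    using assms(3) by (simp add: divide_le_eq mult.commute)
  show ?thesis
  proof (cases "?Opt = 0")
    case True
    then show ?thesis using assms(3) by (simp add: poa_def)
  next
    case False
    with Opt_nonneg have "0 < ?Opt" by simp
    with Opt_le Eq_le have "1 \<le> ?Eq / ?Opt" "?Eq / ?Opt \<le> 1 + r"
      by (simp_all add: divide_le_eq le_divide_eq)
    with False show ?thesis by (simp add: poa_def)
  qed
qed

lemma wardrop_poa_eq_1_if_free_path:
  assumes eq: "wardrop_eq P pe c M f" and "finite E" "finite P" "\<forall>p\<in>P. pe p \<subseteq> E"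
    and nonneg: "\<And>e x. e \<in> E \<Longrightarrow> 0 \<le> x \<Longrightarrow> 0 \<le> c e x"
    and free: "p\<^sub>0 \<in> P" "\<And>e x. e \<in> pe p\<^sub>0 \<Longrightarrow> c e x = 0"
  shows "poa E P pe c M f = 1"
proof -
  have ff: "feasible_flow P M f" using wardrop_eq_feasible[OF eq] .
  have "0 \<le> path_cost P pe c f p" if "p \<in> P" for p
    unfolding path_cost_def using that assms(4)
    by (intro sum_nonneg nonneg edge_load_nonneg[OF ff]) auto
  moreover have "path_cost P pe c f p\<^sub>0 = 0"
    unfolding path_cost_def by (simp add: free(2))
  ultimately have "Min (path_cost P pe c f ` P) = 0"
    using free(1) \<open>finite P\<close> by (intro antisym Min_le Min.boundedI) force+
  then have "social_cost E P pe c f = 0"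
    using wardrop_social_cost[OF assms(1-4)] by simp
  then have "\<bar>poa E P pe c M f - 1\<bar> \<le> 0"
    using social_cost_nonneg[OF _ nonneg] by (intro poa_deviation_le[OF ff nonneg]) auto
  then show ?thesis by simp
qed

section \<open>Polynomials and real inequalities\<close>

lemma poly_bounded_on_unit_interval:
  fixes r :: "real poly"
  obtains K where "0 \<le> K" "\<And>x. 0 \<le> x \<Longrightarrow> x \<le> 1 \<Longrightarrow> \<bar>poly r x\<bar> \<le> K"
proof -
  have "compact (poly r ` {0..1})"
    by (intro compact_continuous_image continuous_intros) auto
  then obtain K where "K > 0" "\<forall>y\<in>poly r ` {0..1}. norm y \<le> K"
    using compact_imp_bounded bounded_pos by metis
  then show ?thesis by (intro that[of K]) auto
qed

lemma poly_nonneg_leading_term: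
  fixes p :: "real poly"
  assumes "p \<noteq> 0" and nonneg: "\<And>x. 0 \<le> x \<Longrightarrow> 0 \<le> poly p x"
  obtains k b K where "0 < b" "0 \<le> K"
    "\<And>x. 0 \<le> x \<Longrightarrow> x \<le> 1 \<Longrightarrow> \<bar>poly p x - b * x ^ k\<bar> \<le> K * x ^ (k + 1)"
proof -
  obtain q where pq: "p = [:0, 1:] ^ order 0 p * q" and q: "\<not> [:0, 1:] dvd q"
    using order_decomp[OF assms(1), of 0] by auto
  define k where "k = order 0 p"
  obtain b r where qbr: "q = pCons b r" by (cases q)
  have "b \<noteq> 0" using q unfolding qbr by (simp add: dvd_iff_poly_eq_0)
  have p_eq: "poly p x = x ^ k * poly q x" for x
    by (subst pq) (simp add: k_def poly_power)
  obtain K where K: "0 \<le> K" "\<And>x. 0 \<le> x \<Longrightarrow> x \<le> 1 \<Longrightarrow> \<bar>poly r x\<bar> \<le> K"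
    using poly_bounded_on_unit_interval by blast
  have "0 < b"
  proof (rule ccontr)
    assume "\<not> 0 < b"
    with \<open>b \<noteq> 0\<close> have "poly q 0 < 0" by (simp add: qbr)
    moreover have "(poly q \<longlongrightarrow> poly q 0) (at_right 0)"
      using poly_isCont[of 0 q] by (simp add: isCont_def filterlim_at_split)
    ultimately have "\<forall>\<^sub>F x in at_right 0. poly q x < 0"
      by (simp add: order_tendstoD(2))
    then obtain x where "0 < x" "poly q x < 0"
      unfolding eventually_at_right_field by (metis field_lbound_gt_zero less_numeral_extra(1))
    then have "poly p x < 0" by (simp add: p_eq mult_pos_neg)
    with nonneg[of x] \<open>0 < x\<close> show False by simp
  qed
  moreover have "\<bar>poly p x - b * x ^ k\<bar> \<le> K * x ^ (k + 1)" if "0 \<le> x" "x \<le> 1" for x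
  proof -
    have "\<bar>poly p x - b * x ^ k\<bar> = x ^ (k + 1) * \<bar>poly r x\<bar>"
      using that by (simp add: p_eq qbr algebra_simps abs_mult)
    also have "\<dots> \<le> x ^ (k + 1) * K" using K that by (intro mult_left_mono) auto
    finally show ?thesis by (simp add: mult.commute)
  qed
  ultimately show ?thesis using K(1) that by blast
qed

lemma tangent_le_power_Suc_diff:
  fixes x y :: real
  assumes "0 \<le> x" "0 \<le> y"
  shows "real (Suc n) * x ^ n * (y - x) \<le> y ^ Suc n - x ^ Suc n"
proof -
  have "(y - x) * x ^ n \<le> (y - x) * (y ^ i * x ^ (n - i))" if "i \<le> n" for i
  proof -
    have "0 \<le> (y - x) * (y ^ i - x ^ i)"
      using assms power_mono[of x y i] power_mono[of y x i]
      by (cases "x \<le> y") (auto intro: mult_nonneg_nonneg mult_nonpos_nonpos)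
    then have "0 \<le> (y - x) * (y ^ i - x ^ i) * x ^ (n - i)"
      using assms by simp
    moreover have "x ^ i * x ^ (n - i) = x ^ n"
      using that by (simp add: power_add[symmetric])
    ultimately show ?thesis by (simp add: algebra_simps)
  qed
  then have "(\<Sum>i<Suc n. (y - x) * x ^ n) \<le> (\<Sum>i<Suc n. (y - x) * (y ^ i * x ^ (n - i)))"
    by (intro sum_mono) auto
  then have "real (Suc n) * x ^ n * (y - x) \<le> (\<Sum>i<Suc n. (y - x) * (y ^ i * x ^ (n - i)))"
    by (simp add: mult_ac)
  also have "\<dots> = y ^ Suc n - x ^ Suc n"
    unfolding diff_power_eq_sum[of y n x] sum_distrib_left ..
  finally show ?thesis .
qed

lemma le_mult_of_power_bound:
  fixes z \<eta> M B \<beta> :: real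
  assumes "j < D" "0 < M" "M \<le> 1" "0 \<le> \<eta>" "0 \<le> \<beta>" "0 \<le> B" "0 \<le> z"
    and "\<beta> / 2 * z ^ j \<le> B * M ^ D" and "2 * B * M < \<beta> * \<eta> ^ j"
  shows "z \<le> \<eta> * M"
proof (rule ccontr)
  assume "\<not> z \<le> \<eta> * M"
  then have "\<beta> / 2 * (\<eta> ^ j * M ^ j) \<le> \<beta> / 2 * z ^ j"
    using assms by (intro mult_left_mono) (auto simp: power_mult_distrib[symmetric] intro: power_mono)
  also have "\<dots> \<le> B * M ^ D" by fact
  also have "\<dots> \<le> B * M ^ Suc j"
    using assms by (intro mult_left_mono power_decreasing) auto
  finally have "(\<beta> * \<eta> ^ j) * M ^ j \<le> (2 * B * M) * M ^ j"
    by (simp add: algebra_simps)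
  then have "\<beta> * \<eta> ^ j \<le> 2 * B * M"
    using \<open>0 < M\<close> by simp
  with assms(9) show False by simp
qed

lemma le_add_relative_error:
  fixes a b \<rho> :: real
  assumes "a \<le> b + \<rho> * a" "0 \<le> \<rho>" "0 \<le> a" "\<rho> \<le> 1 / 2"
  shows "a \<le> (1 + 2 * \<rho>) * b"
proof -
  have "0 \<le> \<rho> * (1 - 2 * \<rho>) * a"
    using assms(2-4) by simp
  moreover have "(1 + 2 * \<rho>) * ((1 - \<rho>) * a) = a + \<rho> * (1 - 2 * \<rho>) * a"
    by (simp add: algebra_simps)
  ultimately have "a \<le> (1 + 2 * \<rho>) * ((1 - \<rho>) * a)" by linarith
  also have "\<dots> \<le> (1 + 2 * \<rho>) * b"
    using assms(1,2) by (intro mult_left_mono) (auto simp: algebra_simps)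
  finally show ?thesis .
qed

section \<open>Costs with leading terms at zero\<close>

locale leading_term_costs =
  fixes E :: "'e set" and P :: "'p set" and pe :: "'p \<Rightarrow> 'e set"
    and c :: "'e \<Rightarrow> real \<Rightarrow> real" and Z :: "'e set"
    and k :: "'e \<Rightarrow> nat" and b :: "'e \<Rightarrow> real" and \<beta> K :: real
  assumes finite_E: "finite E" and finite_P: "finite P" and P_nonempty: "P \<noteq> {}"
    and paths_in_E: "\<forall>p\<in>P. pe p \<subseteq> E"
    and cost_nonneg: "\<And>e x. e \<in> E \<Longrightarrow> 0 \<le> x \<Longrightarrow> 0 \<le> c e x"
    and cost_Z: "\<And>e x. e \<in> Z \<Longrightarrow> c e x = 0"
    and path_not_free: "\<And>p. p \<in> P \<Longrightarrow> pe p - Z \<noteq> {}"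
    and \<beta>_pos: "0 < \<beta>"
    and leading_coeff_bounds: "\<And>e. e \<in> E - Z \<Longrightarrow> \<beta> \<le> b e \<and> b e \<le> K"
    and leading_term: "\<And>e x. e \<in> E - Z \<Longrightarrow> 0 \<le> x \<Longrightarrow> x \<le> 1 \<Longrightarrow>
                         \<bar>c e x - b e * x ^ k e\<bar> \<le> K * x ^ (k e + 1)"
begin

definition path_order :: "'p \<Rightarrow> nat" where
  "path_order p = Min (k ` (pe p - Z))"

text \<open>The equilibrium path cost at demand \<open>M\<close> is of order \<open>M ^ game_order\<close>.\<close>

definition game_order :: nat where
  "game_order = Max (path_order ` P)"

definition low_order_edge :: "'e \<Rightarrow> bool" where
  "low_order_edge e \<longleftrightarrow> e \<in> E - Z \<and> k e < game_order"

definition leading_cost :: "'e \<Rightarrow> real \<Rightarrow> real" where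
  "leading_cost e u = (if e \<in> E - Z \<and> k e = game_order then b e * u ^ (game_order + 1) else 0)"

definition leading_social_cost :: "('e \<Rightarrow> real) \<Rightarrow> real" where
  "leading_social_cost x = (\<Sum>e\<in>E. leading_cost e (x e))"

lemma finite_path_edges: "p \<in> P \<Longrightarrow> finite (pe p)"
  using finite_E paths_in_E by (meson finite_subset)

lemma game_order_attained:
  obtains p where "p \<in> P" "\<And>e. e \<in> pe p - Z \<Longrightarrow> game_order \<le> k e"
proof -
  have "game_order \<in> path_order ` P"
    unfolding game_order_def using finite_P P_nonempty by simp
  then obtain p where p: "p \<in> P" "path_order p = game_order" by auto
  have "path_order p \<le> k e" if "e \<in> pe p - Z" for e
    unfolding path_order_def using finite_path_edges[OF p(1)] that by (intro Min_le) auto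
  with p show ?thesis using that by simp
qed

lemma path_has_edge_below_game_order:
  assumes "p \<in> P"
  obtains e where "e \<in> pe p - Z" "k e \<le> game_order"
proof -
  have "path_order p \<in> k ` (pe p - Z)"
    unfolding path_order_def using assms finite_path_edges path_not_free by simp
  moreover have "path_order p \<le> game_order"
    unfolding game_order_def using assms finite_P by simp
  ultimately show ?thesis using that by force
qed

lemma exists_nonfree_edge: "\<exists>e. e \<in> E - Z"
proof -
  obtain p where "p \<in> P" using P_nonempty by blast
  then obtain e where "e \<in> pe p - Z" using path_not_free by blast
  then show ?thesis using \<open>p \<in> P\<close> paths_in_E by auto
qed

lemma \<beta>_le_K: "\<beta> \<le> K"
  using exists_nonfree_edge leading_coeff_bounds by force

lemma K_pos: "0 < K"
  using \<beta>_pos \<beta>_le_K by simp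

lemma cost_le_power:
  assumes "e \<in> E - Z" "j \<le> k e" "0 \<le> u" "u \<le> M" "M \<le> 1"
  shows "c e u \<le> 2 * K * M ^ j"
proof -
  have "u ^ (k e + 1) \<le> u ^ k e"
    using power_decreasing[of "k e" "k e + 1" u] assms(3-5) by simp
  moreover have "u ^ k e \<le> M ^ k e" "M ^ k e \<le> M ^ j"
    using assms by (auto intro!: power_decreasing power_mono)
  ultimately have "b e * u ^ k e \<le> K * M ^ j" "K * u ^ (k e + 1) \<le> K * M ^ j"
    using assms(3) K_pos leading_coeff_bounds[OF assms(1)]
    by (auto intro!: mult_mono intro: order_trans)
  moreover have "c e u \<le> b e * u ^ k e + K * u ^ (k e + 1)"
    using leading_term[OF assms(1,3)] assms(4,5) by (simp add: abs_le_iff)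
  ultimately show ?thesis by simp
qed

lemma cost_ge:
  assumes "e \<in> E - Z" "0 \<le> u" "u \<le> 1" "2 * K * u \<le> \<beta>"
  shows "\<beta> / 2 * u ^ k e \<le> c e u"
proof -
  have "\<beta> / 2 \<le> b e - K * u"
    using assms(4) leading_coeff_bounds[OF assms(1)] by simp
  then have "\<beta> / 2 * u ^ k e \<le> (b e - K * u) * u ^ k e"
    using assms(2) by (intro mult_right_mono) auto
  also have "\<dots> \<le> c e u"
    using leading_term[OF assms(1-3)] by (simp add: abs_le_iff algebra_simps)
  finally show ?thesis .
qed

lemma edge_cost_le_leading_cost:
  assumes "e \<in> E" "\<not> low_order_edge e" "0 \<le> u" "u \<le> M" "M \<le> 1"
  shows "u * c e u \<le> leading_cost e u + 2 * K * M ^ (game_order + 2)"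
proof -
  have u1: "u \<le> 1" using assms by simp
  have KuM: "K * u ^ (game_order + 2) \<le> K * M ^ (game_order + 2)"
    using assms K_pos by (intro mult_left_mono power_mono) auto
  have KM: "0 \<le> K * M ^ (game_order + 2)"
    using assms K_pos by simp
  consider "e \<in> Z" | "e \<in> E - Z" "k e = game_order" | "e \<in> E - Z" "game_order + 1 \<le> k e"
    using assms(1,2) unfolding low_order_edge_def by fastforce
  then show ?thesis
  proof cases
    case 1
    then show ?thesis using cost_Z KM by (simp add: leading_cost_def)
  next
    case 2
    have "u * c e u \<le> u * (b e * u ^ game_order + K * u ^ (game_order + 1))"
      using leading_term[OF 2(1) assms(3) u1] assms(3) 2(2)
      by (intro mult_left_mono) (simp_all add: abs_le_iff)
    also have "\<dots> = b e * u ^ (game_order + 1) + K * u ^ (game_order + 2)"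
      by (simp add: algebra_simps)
    finally show ?thesis using 2 KuM KM by (simp add: leading_cost_def)
  next
    case 3
    have "u * c e u \<le> M * (2 * K * M ^ (game_order + 1))"
      using cost_le_power[OF 3(1) _ assms(3-5), of "game_order + 1"] 3(2) assms(3,4)
        cost_nonneg[OF assms(1,3)] by (intro mult_mono) auto
    then show ?thesis using 3 by (simp add: leading_cost_def algebra_simps)
  qed
qed

lemma leading_cost_le_edge_cost:
  assumes "e \<in> E" "0 \<le> w" "w \<le> M" "M \<le> 1"
  shows "leading_cost e w \<le> w * c e w + K * M ^ (game_order + 2)"
proof (cases "e \<in> E - Z \<and> k e = game_order")
  case True
  then have "b e * w ^ game_order - K * w ^ (game_order + 1) \<le> c e w"
    using leading_term[of e w] assms by (simp add: abs_le_iff)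
  then have "w * (b e * w ^ game_order - K * w ^ (game_order + 1)) \<le> w * c e w"
    using assms by (intro mult_left_mono) auto
  moreover have "K * w ^ (game_order + 2) \<le> K * M ^ (game_order + 2)"
    using assms K_pos by (intro mult_left_mono power_mono) auto
  ultimately show ?thesis
    using True by (simp add: leading_cost_def algebra_simps)
next
  case False
  then have "leading_cost e w = 0" unfolding leading_cost_def by (rule if_not_P)
  moreover have "0 \<le> w * c e w" using cost_nonneg[OF assms(1,2)] assms(2) by simp
  moreover have "0 \<le> K * M ^ (game_order + 2)" using K_pos assms by simp
  ultimately show ?thesis by linarith
qed

lemma edge_load_cost_ge:
  assumes "feasible_flow P M g" "M \<le> 1" "2 * K * M \<le> \<beta>" "e \<in> E - Z"
  shows "\<beta> / 2 * edge_load P pe g e ^ k e \<le> c e (edge_load P pe g e)"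
proof (rule cost_ge[OF assms(4) edge_load_nonneg[OF assms(1)]])
  have le_M: "edge_load P pe g e \<le> M" by (rule edge_load_le_demand[OF assms(1) finite_P])
  then show "edge_load P pe g e \<le> 1" using assms(2) by simp
  have "2 * K * edge_load P pe g e \<le> 2 * K * M" using le_M K_pos by simp
  then show "2 * K * edge_load P pe g e \<le> \<beta>" using assms(3) by simp
qed

text \<open>Flow on paths through low-order edges is dropped: such an edge may carry no equilibrium
  flow and still cost order 1 (when \<open>k e = 0\<close>), so the variational inequality of the equilibrium
  is informative only on the remaining paths.\<close>

definition good_part :: "('p \<Rightarrow> real) \<Rightarrow> 'p \<Rightarrow> real" where
  "good_part g p = (if \<exists>e\<in>pe p. low_order_edge e then 0 else g p)"

lemma edge_load_good_part_le:
  assumes "feasible_flow P M g"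
  shows "0 \<le> edge_load P pe (good_part g) e" "edge_load P pe (good_part g) e \<le> edge_load P pe g e"
  using feasible_flowD(1)[OF assms]
  unfolding edge_load_def good_part_def by (auto intro!: sum_nonneg sum_mono)

lemma good_part_nonneg: "feasible_flow P M g \<Longrightarrow> p \<in> P \<Longrightarrow> 0 \<le> good_part g p"
  unfolding good_part_def by (auto dest: feasible_flowD)

lemma edge_load_good_part_low_order:
  "low_order_edge e \<Longrightarrow> edge_load P pe (good_part g) e = 0"
  unfolding edge_load_def good_part_def by (intro sum.neutral) auto

text \<open>Tangent inequality for the convex function \<open>b e * x ^ (game_order + 1)\<close>, whose derivative
  is \<open>game_order + 1\<close> times the leading term of \<open>c e\<close>.\<close>

lemma leading_edge_tangent:
  assumes "e \<in> E - Z" "k e = game_order" "0 \<le> u" "u \<le> M" "0 \<le> v" "v \<le> w" "w \<le> M" "M \<le> 1"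
  shows "real (game_order + 1) * (c e u * (v - u))
           \<le> b e * (w ^ (game_order + 1) - u ^ (game_order + 1)) + real (game_order + 1) * (K * M ^ (game_order + 2))"
proof -
  let ?n = "game_order"
  have "real (Suc ?n) * u ^ ?n * (v - u) \<le> v ^ Suc ?n - u ^ Suc ?n"
    using assms by (intro tangent_le_power_Suc_diff) auto
  also have "\<dots> \<le> w ^ Suc ?n - u ^ Suc ?n"
    using power_mono[of v w "Suc ?n"] assms by simp
  finally have "b e * (real (Suc ?n) * u ^ ?n * (v - u)) \<le> b e * (w ^ Suc ?n - u ^ Suc ?n)"
    using leading_coeff_bounds[OF assms(1)] \<beta>_pos by (intro mult_left_mono) auto
  then have tangent: "real (?n + 1) * (b e * u ^ ?n * (v - u)) \<le> b e * (w ^ (?n + 1) - u ^ (?n + 1))"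
    by (simp add: algebra_simps)
  have "K * u ^ (?n + 1) \<le> K * M ^ (?n + 1)"
    using assms K_pos by (intro mult_left_mono power_mono) auto
  then have "\<bar>c e u - b e * u ^ ?n\<bar> \<le> K * M ^ (?n + 1)"
    using leading_term[OF assms(1,3)] assms(2,4,8) by simp
  moreover have "\<bar>v - u\<bar> \<le> M" using assms by simp
  ultimately have "\<bar>(c e u - b e * u ^ ?n) * (v - u)\<bar> \<le> K * M ^ (?n + 1) * M"
    unfolding abs_mult by (intro mult_mono) auto
  then have remainder: "(c e u - b e * u ^ ?n) * (v - u) \<le> K * M ^ (?n + 2)"
    by (simp add: algebra_simps)
  have "real (?n + 1) * (c e u * (v - u))
      = real (?n + 1) * (b e * u ^ ?n * (v - u)) + real (?n + 1) * ((c e u - b e * u ^ ?n) * (v - u))"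
    by (simp add: algebra_simps)
  also have "\<dots> \<le> b e * (w ^ (?n + 1) - u ^ (?n + 1)) + real (?n + 1) * (K * M ^ (?n + 2))"
    using tangent remainder by (intro add_mono mult_left_mono) auto
  finally show ?thesis .
qed

lemma edge_variational_le_leading_cost:
  assumes "e \<in> E" "0 \<le> u" "u \<le> M" "0 \<le> v" "v \<le> w" "w \<le> M" "M \<le> 1"
    and "low_order_edge e \<Longrightarrow> v = 0"
  shows "real (game_order + 1) * (c e u * (v - u))
           \<le> leading_cost e w - leading_cost e u + real (game_order + 1) * (2 * K * M ^ (game_order + 2))"
proof -
  let ?n = "game_order" and ?err = "2 * K * M ^ (game_order + 2)"
  have err: "0 \<le> ?err" using assms K_pos by simp
  consider "e \<in> Z" | "low_order_edge e" | "e \<in> E - Z" "k e = ?n" | "e \<in> E - Z" "?n + 1 \<le> k e"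
    using assms(1) unfolding low_order_edge_def by fastforce
  then show ?thesis
  proof cases
    case 1
    then show ?thesis using cost_Z err by (simp add: leading_cost_def)
  next
    case 2
    then have "c e u * (v - u) \<le> 0"
      using assms cost_nonneg by (simp add: mult_nonneg_nonpos)
    with 2 err show ?thesis
      by (simp add: leading_cost_def low_order_edge_def mult_nonneg_nonpos)
  next
    case 3
    have "real (?n + 1) * (K * M ^ (?n + 2)) \<le> real (?n + 1) * ?err"
      using K_pos assms by (intro mult_left_mono) auto
    moreover have "leading_cost e w - leading_cost e u = b e * (w ^ (?n + 1) - u ^ (?n + 1))"
      using 3 by (simp add: leading_cost_def algebra_simps)
    ultimately show ?thesis
      using leading_edge_tangent[OF 3 assms(2-7)] by linarith
  next
    case 4
    have "c e u * (v - u) \<le> c e u * v"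
      using assms cost_nonneg[of e u] by (simp add: algebra_simps)
    also have "\<dots> \<le> (2 * K * M ^ (?n + 1)) * M"
      using cost_le_power[OF 4(1,2) assms(2,3,7)] cost_nonneg[OF assms(1,2)] assms(4-6)
      by (intro mult_mono) auto
    finally have "c e u * (v - u) \<le> ?err" by (simp add: algebra_simps)
    with 4 err show ?thesis
      by (simp add: leading_cost_def)
  qed
qed

lemma sum_variational_le_leading_social_cost:
  assumes f: "feasible_flow P M f" and g: "feasible_flow P M g" and "M \<le> 1"
  shows "real (game_order + 1) *
           (\<Sum>e\<in>E. c e (edge_load P pe f e) * (edge_load P pe (good_part g) e - edge_load P pe f e))
         \<le> leading_social_cost (edge_load P pe g) - leading_social_cost (edge_load P pe f)
           + real (game_order + 1) * (card E * (2 * K * M ^ (game_order + 2)))"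
proof -
  let ?x = "edge_load P pe f" and ?z = "edge_load P pe (good_part g)" and ?y = "edge_load P pe g"
  have "real (game_order + 1) * (\<Sum>e\<in>E. c e (?x e) * (?z e - ?x e))
      \<le> (\<Sum>e\<in>E. leading_cost e (?y e) - leading_cost e (?x e)
            + real (game_order + 1) * (2 * K * M ^ (game_order + 2)))"
    unfolding sum_distrib_left
  proof (rule sum_mono)
    fix e assume "e \<in> E"
    show "real (game_order + 1) * (c e (?x e) * (?z e - ?x e))
        \<le> leading_cost e (?y e) - leading_cost e (?x e) + real (game_order + 1) * (2 * K * M ^ (game_order + 2))"
      by (rule edge_variational_le_leading_cost[OF \<open>e \<in> E\<close> edge_load_nonneg[OF f]
            edge_load_le_demand[OF f finite_P] edge_load_good_part_le[OF g]
            edge_load_le_demand[OF g finite_P] \<open>M \<le> 1\<close> edge_load_good_part_low_order])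
  qed
  then show ?thesis
    by (simp add: leading_social_cost_def sum.distrib sum_subtractf mult_ac)
qed

lemma leading_social_cost_le_social_cost:
  assumes "feasible_flow P M g" "M \<le> 1"
  shows "leading_social_cost (edge_load P pe g) \<le> social_cost E P pe c g + card E * (K * M ^ (game_order + 2))"
proof -
  have "leading_social_cost (edge_load P pe g)
      \<le> (\<Sum>e\<in>E. edge_load P pe g e * c e (edge_load P pe g e) + K * M ^ (game_order + 2))"
    unfolding leading_social_cost_def using assms edge_load_nonneg edge_load_le_demand finite_P
    by (intro sum_mono leading_cost_le_edge_cost) auto
  then show ?thesis by (simp add: sum.distrib social_cost_def)
qed

text \<open>The additive error of \<open>social_cost_le_add_error\<close> below, divided by the lower bound
  \<open>\<beta> * M ^ (game_order + 1) / (2 * card P ^ game_order)\<close> of the equilibrium social cost and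
  by \<open>M + card E * \<eta>\<close>.\<close>

definition error_rate :: real where
  "error_rate = 4 * (game_order + 3) * K * card E * card P ^ game_order / \<beta>"

end

section \<open>Equilibria at small demand\<close>

text \<open>The parameter \<open>\<eta>\<close> is fixed before \<open>M\<close> is taken small; low-order edges then carry at
  most \<open>\<eta> * M\<close>.\<close>

locale small_equilibrium = leading_term_costs +
  fixes M :: real and f and \<eta> :: real
  assumes equilibrium: "wardrop_eq P pe c M f"
    and M_pos: "0 < M" and M_le_1: "M \<le> 1" and KM_le_\<beta>: "2 * K * M \<le> \<beta>"
    and \<eta>_pos: "0 < \<eta>" and \<eta>_le_1: "\<eta> \<le> 1"
    and M_less_\<eta>: "4 * K * card E * M < \<beta> * \<eta> ^ game_order"
begin

definition eq_cost :: real where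
  "eq_cost = Min (path_cost P pe c f ` P)"

abbreviation load where
  "load \<equiv> edge_load P pe f"

lemma feasible: "feasible_flow P M f"
  using wardrop_eq_feasible[OF equilibrium] .

lemma load_nonneg: "0 \<le> load e"
  using edge_load_nonneg[OF feasible] .

lemma load_le: "load e \<le> M"
  using edge_load_le_demand[OF feasible finite_P] .

lemma social_cost_eq: "social_cost E P pe c f = M * eq_cost"
  unfolding eq_cost_def by (rule wardrop_social_cost[OF equilibrium finite_E finite_P paths_in_E])

lemma eq_cost_le: "eq_cost \<le> 2 * K * card E * M ^ game_order"
proof -
  obtain p where p: "p \<in> P" "\<And>e. e \<in> pe p - Z \<Longrightarrow> game_order \<le> k e"
    using game_order_attained by blast
  have "c e (load e) \<le> 2 * K * M ^ game_order" if "e \<in> pe p" for e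
  proof (cases "e \<in> Z")
    case True
    then show ?thesis using cost_Z K_pos M_pos by simp
  next
    case False
    with that p have e: "e \<in> E - Z" "game_order \<le> k e" using paths_in_E by auto
    then show ?thesis using cost_le_power[OF e load_nonneg load_le M_le_1] by simp
  qed
  have "eq_cost \<le> path_cost P pe c f p"
    unfolding eq_cost_def using p(1) finite_P by simp
  also have "\<dots> \<le> card (pe p) * (2 * K * M ^ game_order)"
    unfolding path_cost_def using \<open>\<And>e. e \<in> pe p \<Longrightarrow> _\<close> by (intro sum_bounded_above) auto
  also have "\<dots> \<le> card E * (2 * K * M ^ game_order)"
    using card_mono[OF finite_E] p(1) paths_in_E K_pos M_pos by (intro mult_right_mono) auto
  finally show ?thesis by (simp add: algebra_simps)
qed

lemma eq_cost_ge: "\<beta> / (2 * card P ^ game_order) * M ^ game_order \<le> eq_cost"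
proof -
  obtain p where p: "p \<in> P" "M / card P \<le> f p"
    using exists_path_flow_ge_average[OF feasible finite_P P_nonempty] by blast
  obtain e where e: "e \<in> pe p - Z" "k e \<le> game_order"
    using path_has_edge_below_game_order[OF p(1)] by blast
  have eE: "e \<in> E - Z" using e p paths_in_E by auto
  have n: "1 \<le> real (card P)" using finite_P P_nonempty by (simp add: Suc_le_eq card_gt_0_iff)
  have "f p \<le> load e"
    unfolding edge_load_def using finite_P p(1) e feasible_flowD(1)[OF feasible]
    by (intro member_le_sum) auto
  with p(2) have le_load: "M / card P \<le> load e" by simp
  have "0 < M / card P" using M_pos n by simp
  with p(2) have "0 < f p" by linarith
  have "\<beta> / (2 * card P ^ game_order) * M ^ game_order = \<beta> / 2 * (M / card P) ^ game_order"
    by (simp add: power_divide)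
  also have "\<dots> \<le> \<beta> / 2 * (M / card P) ^ k e"
    using \<beta>_pos M_pos M_le_1 n e(2)
    by (intro mult_left_mono power_decreasing) (auto simp: divide_le_eq)
  also have "\<dots> \<le> \<beta> / 2 * load e ^ k e"
    using \<beta>_pos M_pos n le_load by (intro mult_left_mono power_mono) auto
  also have "\<dots> \<le> c e (load e)"
    using edge_load_cost_ge[OF feasible M_le_1 KM_le_\<beta> eE] .
  also have "\<dots> \<le> path_cost P pe c f p"
    unfolding path_cost_def using e p(1) finite_path_edges paths_in_E
    by (intro member_le_sum cost_nonneg load_nonneg) auto
  also have "\<dots> = eq_cost"
    unfolding eq_cost_def by (rule wardrop_used_path_cost[OF equilibrium finite_P p(1) \<open>0 < f p\<close>])
  finally show ?thesis .
qed

lemma loaded_edge_cost_le: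
  assumes "0 < load e"
  shows "c e (load e) \<le> 2 * K * card E * M ^ game_order"
proof -
  have "c e (load e) \<le> eq_cost"
    unfolding eq_cost_def
    by (rule wardrop_loaded_edge_cost_le[OF equilibrium finite_E finite_P paths_in_E cost_nonneg assms])
  with eq_cost_le show ?thesis by simp
qed

lemma eq_cost_nonneg: "0 \<le> eq_cost"
proof -
  have "0 \<le> \<beta> / (2 * card P ^ game_order) * M ^ game_order" using \<beta>_pos M_pos by simp
  then show ?thesis using eq_cost_ge by linarith
qed

lemma low_order_load_le:
  assumes "low_order_edge e"
  shows "load e \<le> \<eta> * M"
proof (cases "load e = 0")
  case True
  then show ?thesis using \<eta>_pos M_pos by simp
next
  case False
  with load_nonneg have "0 < load e" by (simp add: less_le)
  have e: "e \<in> E - Z" "k e < game_order" using assms by (auto simp: low_order_edge_def)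
  have "\<beta> / 2 * load e ^ k e \<le> c e (load e)"
    using edge_load_cost_ge[OF feasible M_le_1 KM_le_\<beta> e(1)] .
  also have "\<dots> \<le> (2 * K * card E) * M ^ game_order"
    using loaded_edge_cost_le[OF \<open>0 < load e\<close>] by simp
  finally have cost_bound: "\<beta> / 2 * load e ^ k e \<le> (2 * K * card E) * M ^ game_order" .
  have "\<beta> * \<eta> ^ game_order \<le> \<beta> * \<eta> ^ k e"
    using \<beta>_pos \<eta>_pos \<eta>_le_1 e(2) by (intro mult_left_mono power_decreasing) auto
  then have "2 * (2 * K * card E) * M < \<beta> * \<eta> ^ k e"
    using M_less_\<eta> by simp
  from le_mult_of_power_bound[OF e(2) M_pos M_le_1 _ _ _ load_nonneg cost_bound this]
  show ?thesis using \<eta>_pos \<beta>_pos K_pos by simp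
qed

lemma load_cost_le_leading_cost:
  assumes "e \<in> E"
  shows "load e * c e (load e) \<le> leading_cost e (load e)
           + 2 * K * (M ^ (game_order + 2) + card E * \<eta> * M ^ (game_order + 1))"
proof (cases "low_order_edge e")
  case True
  have "load e * c e (load e) \<le> (\<eta> * M) * (2 * K * card E * M ^ game_order)"
  proof (cases "load e = 0")
    case False
    with load_nonneg have "0 < load e" by (simp add: less_le)
    then show ?thesis
      using loaded_edge_cost_le low_order_load_le[OF True] load_nonneg cost_nonneg[OF assms load_nonneg] \<eta>_pos M_pos
      by (intro mult_mono) auto
  qed (use \<eta>_pos M_pos K_pos in simp)
  moreover have "leading_cost e (load e) = 0"
    using True by (simp add: leading_cost_def low_order_edge_def)
  moreover have "0 \<le> 2 * K * M ^ (game_order + 2)"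
    using K_pos M_pos by simp
  ultimately show ?thesis by (simp add: algebra_simps)
next
  case False
  then have "load e * c e (load e) \<le> leading_cost e (load e) + 2 * K * M ^ (game_order + 2)"
    using assms load_nonneg load_le M_le_1 by (intro edge_cost_le_leading_cost) auto
  moreover have "0 \<le> 2 * K * (card E * \<eta> * M ^ (game_order + 1))"
    using K_pos \<eta>_pos M_pos by simp
  ultimately show ?thesis by (simp add: algebra_simps)
qed

lemma social_cost_le_leading_social_cost:
  "social_cost E P pe c f \<le> leading_social_cost load
     + card E * (2 * K * (M ^ (game_order + 2) + card E * \<eta> * M ^ (game_order + 1)))"
proof -
  have "social_cost E P pe c f
      \<le> (\<Sum>e\<in>E. leading_cost e (load e)
           + 2 * K * (M ^ (game_order + 2) + card E * \<eta> * M ^ (game_order + 1)))"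
    unfolding social_cost_def by (intro sum_mono load_cost_le_leading_cost)
  then show ?thesis by (simp add: sum.distrib leading_social_cost_def)
qed

lemma low_order_load_le_if_cheaper:
  assumes g: "feasible_flow P M g" and cheaper: "social_cost E P pe c g \<le> social_cost E P pe c f"
    and "low_order_edge e"
  shows "edge_load P pe g e \<le> \<eta> * M"
proof -
  let ?y = "edge_load P pe g e"
  have e: "e \<in> E - Z" "k e < game_order" using assms(3) by (auto simp: low_order_edge_def)
  have "\<beta> / 2 * ?y ^ (k e + 1) = ?y * (\<beta> / 2 * ?y ^ k e)" by (simp add: algebra_simps)
  also have "\<dots> \<le> ?y * c e ?y"
    using edge_load_cost_ge[OF g M_le_1 KM_le_\<beta> e(1)] edge_load_nonneg[OF g] by (intro mult_left_mono)
  also have "\<dots> \<le> social_cost E P pe c g"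
    unfolding social_cost_def using e(1) finite_E edge_load_nonneg[OF g]
    by (intro member_le_sum mult_nonneg_nonneg cost_nonneg) auto
  also have "\<dots> \<le> M * eq_cost" using cheaper social_cost_eq by simp
  also have "\<dots> \<le> M * (2 * K * card E * M ^ game_order)"
    using eq_cost_le M_pos by simp
  finally have cost_bound: "\<beta> / 2 * ?y ^ (k e + 1) \<le> (2 * K * card E) * M ^ (game_order + 1)"
    by (simp add: algebra_simps)
  have "\<beta> * \<eta> ^ game_order \<le> \<beta> * \<eta> ^ (k e + 1)"
    using \<beta>_pos \<eta>_pos \<eta>_le_1 e(2) by (intro mult_left_mono power_decreasing) auto
  then have "2 * (2 * K * card E) * M < \<beta> * \<eta> ^ (k e + 1)"
    using M_less_\<eta> by simp
  from le_mult_of_power_bound[OF _ M_pos M_le_1 _ _ _ edge_load_nonneg[OF g] cost_bound this]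
  show ?thesis using e(2) \<eta>_pos \<beta>_pos K_pos by simp
qed

lemma low_order_path_flow_le_if_cheaper:
  assumes g: "feasible_flow P M g" and cheaper: "social_cost E P pe c g \<le> social_cost E P pe c f"
  shows "(\<Sum>p\<in>P. g p - good_part g p) \<le> card E * \<eta> * M"
proof -
  define ind where "ind e = (if low_order_edge e then 1 else (0::real))" for e
  have "g p - good_part g p \<le> g p * (\<Sum>e\<in>pe p. ind e)" if p: "p \<in> P" for p
  proof (cases "\<exists>e\<in>pe p. low_order_edge e")
    case True
    then obtain e where "e \<in> pe p" "low_order_edge e" by blast
    then have "1 \<le> (\<Sum>e\<in>pe p. ind e)"
      using finite_path_edges[OF p] member_le_sum[of e "pe p" ind] by (simp add: ind_def)
    then show ?thesis
      using True feasible_flowD(1)[OF g p] mult_left_mono[of 1 _ "g p"] by (simp add: good_part_def)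
  next
    case False
    then show ?thesis
      using feasible_flowD(1)[OF g p] by (simp add: good_part_def ind_def sum_nonneg)
  qed
  then have "(\<Sum>p\<in>P. g p - good_part g p) \<le> (\<Sum>p\<in>P. g p * (\<Sum>e\<in>pe p. ind e))"
    by (rule sum_mono)
  also have "\<dots> = (\<Sum>e\<in>E. edge_load P pe g e * ind e)"
    by (rule sum_edge_load_mult[symmetric, OF finite_E finite_P paths_in_E])
  also have "\<dots> \<le> (\<Sum>e\<in>E. \<eta> * M)"
    using low_order_load_le_if_cheaper[OF g cheaper] \<eta>_pos M_pos
    by (intro sum_mono) (simp add: ind_def)
  finally show ?thesis by simp
qed

lemma social_cost_le_good_part:
  assumes g: "feasible_flow P M g"
  shows "social_cost E P pe c f \<le> (\<Sum>e\<in>E. edge_load P pe (good_part g) e * c e (load e))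
           + (\<Sum>p\<in>P. g p - good_part g p) * eq_cost"
proof -
  have "(\<Sum>p\<in>P. good_part g p) * eq_cost \<le> (\<Sum>e\<in>E. edge_load P pe (good_part g) e * c e (load e))"
    unfolding eq_cost_def using good_part_nonneg[OF g]
    by (intro path_flow_cost_le[OF finite_E finite_P paths_in_E])
  moreover have "(\<Sum>p\<in>P. good_part g p) = M - (\<Sum>p\<in>P. g p - good_part g p)"
    using feasible_flowD(2)[OF g] by (simp add: sum_subtractf)
  ultimately show ?thesis using social_cost_eq by (simp add: algebra_simps)
qed

lemma leading_social_cost_le_if_cheaper:
  assumes g: "feasible_flow P M g" and cheaper: "social_cost E P pe c g \<le> social_cost E P pe c f"
  shows "leading_social_cost load \<le> leading_social_cost (edge_load P pe g)
           + real (game_order + 1) * (card E * (2 * K * (M ^ (game_order + 2) + card E * \<eta> * M ^ (game_order + 1))))"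
proof -
  let ?z = "edge_load P pe (good_part g)" and ?y = "edge_load P pe g"
  let ?n = "real (game_order + 1)" and ?t = "\<Sum>p\<in>P. g p - good_part g p"
  let ?S = "\<Sum>e\<in>E. c e (load e) * (?z e - load e)"
  have "?S = (\<Sum>e\<in>E. ?z e * c e (load e)) - social_cost E P pe c f"
    unfolding social_cost_def sum_subtractf[symmetric] by (rule sum.cong) (simp_all add: algebra_simps)
  then have "0 \<le> ?S + ?t * eq_cost"
    using social_cost_le_good_part[OF g] by simp
  then have variational: "0 \<le> ?n * ?S + ?n * (?t * eq_cost)"
    by (simp add: distrib_left[symmetric])
  have tangent: "?n * ?S \<le> leading_social_cost ?y - leading_social_cost load
      + ?n * (card E * (2 * K * M ^ (game_order + 2)))"
    by (rule sum_variational_le_leading_social_cost[OF feasible g M_le_1])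
  have "?t * eq_cost \<le> (card E * \<eta> * M) * (2 * K * card E * M ^ game_order)"
    using low_order_path_flow_le_if_cheaper[OF g cheaper] eq_cost_le eq_cost_nonneg \<eta>_pos M_pos
    by (intro mult_mono) auto
  then have bad: "?n * (?t * eq_cost) \<le> ?n * ((card E * \<eta> * M) * (2 * K * card E * M ^ game_order))"
    by (intro mult_left_mono) auto
  have "?n * (card E * (2 * K * M ^ (game_order + 2))) + ?n * ((card E * \<eta> * M) * (2 * K * card E * M ^ game_order))
      = ?n * (card E * (2 * K * (M ^ (game_order + 2) + card E * \<eta> * M ^ (game_order + 1))))"
    by (simp add: algebra_simps)
  with variational tangent bad show ?thesis by linarith
qed

lemma social_cost_le_add_error:
  assumes g: "feasible_flow P M g"
  shows "social_cost E P pe c f \<le> social_cost E P pe c g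
           + real (game_order + 3) * (card E * (2 * K * (M + card E * \<eta>) * M ^ (game_order + 1)))"
proof (cases "social_cost E P pe c f \<le> social_cost E P pe c g")
  case True
  moreover have "0 \<le> real (game_order + 3) * (card E * (2 * K * (M + card E * \<eta>) * M ^ (game_order + 1)))"
    using K_pos M_pos \<eta>_pos by simp
  ultimately show ?thesis by linarith
next
  case False
  let ?err = "card E * (2 * K * (M ^ (game_order + 2) + card E * \<eta> * M ^ (game_order + 1)))"
  have "social_cost E P pe c f \<le> leading_social_cost load + ?err"
    by (rule social_cost_le_leading_social_cost)
  also have "leading_social_cost load \<le> leading_social_cost (edge_load P pe g) + real (game_order + 1) * ?err"
    using False by (intro leading_social_cost_le_if_cheaper[OF g]) simp
  also have "leading_social_cost (edge_load P pe g) \<le> social_cost E P pe c g + ?err"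
  proof -
    have "K * M ^ (game_order + 2) \<le> 2 * K * (M ^ (game_order + 2) + card E * \<eta> * M ^ (game_order + 1))"
      using K_pos M_pos \<eta>_pos by (simp add: algebra_simps)
    then have "card E * (K * M ^ (game_order + 2)) \<le> ?err" by (intro mult_left_mono) auto
    then show ?thesis using leading_social_cost_le_social_cost[OF g M_le_1] by simp
  qed
  finally show ?thesis by (simp add: algebra_simps)
qed

lemma social_cost_le_mult_error:
  assumes g: "feasible_flow P M g" and small: "error_rate * (M + card E * \<eta>) \<le> 1 / 2"
  shows "social_cost E P pe c f \<le> (1 + 2 * (error_rate * (M + card E * \<eta>))) * social_cost E P pe c g"
proof -
  let ?Sf = "social_cost E P pe c f" and ?\<rho> = "error_rate * (M + card E * \<eta>)"
  have "\<beta> / (2 * card P ^ game_order) * M ^ (game_order + 1) \<le> ?Sf"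
    using mult_left_mono[OF eq_cost_ge, of M] M_pos social_cost_eq by (simp add: algebra_simps)
  then have "M ^ (game_order + 1) \<le> 2 * card P ^ game_order / \<beta> * ?Sf"
    using \<beta>_pos P_nonempty finite_P by (simp add: field_simps card_gt_0_iff)
  then have "real (game_order + 3) * (card E * (2 * K * (M + card E * \<eta>) * M ^ (game_order + 1)))
      \<le> real (game_order + 3) * (card E * (2 * K * (M + card E * \<eta>) * (2 * card P ^ game_order / \<beta> * ?Sf)))"
    using K_pos M_pos \<eta>_pos by (intro mult_left_mono) auto
  also have "\<dots> = ?\<rho> * ?Sf"
    by (simp add: error_rate_def)
  finally have "?Sf \<le> social_cost E P pe c g + ?\<rho> * ?Sf"
    using social_cost_le_add_error[OF g] by linarith
  moreover have "0 \<le> ?\<rho>"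
    using K_pos \<beta>_pos M_pos \<eta>_pos by (simp add: error_rate_def)
  moreover have "0 \<le> ?Sf" by (rule social_cost_nonneg[OF feasible cost_nonneg])
  ultimately show ?thesis using small by (rule le_add_relative_error)
qed

end

context leading_term_costs
begin

theorem poa_tends_to_1:
  assumes "0 < \<epsilon>"
  shows "\<exists>\<delta>>0. \<forall>M f. 0 < M \<and> M < \<delta> \<and> wardrop_eq P pe c M f \<longrightarrow> \<bar>poa E P pe c M f - 1\<bar> < \<epsilon>"
proof -
  define N where "N = real (card E)"
  define \<rho> where "\<rho> = min (1 / 2) (\<epsilon> / 4)"
  define \<eta> where "\<eta> = min 1 (\<rho> / (2 * error_rate * N))"
  define \<delta> where "\<delta> = min (min 1 (\<beta> / (2 * K))) (min (\<beta> * \<eta> ^ game_order / (4 * K * N)) (\<rho> / (2 * error_rate)))"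
  have N: "1 \<le> N"
    unfolding N_def using exists_nonfree_edge finite_E by (auto simp: Suc_le_eq card_gt_0_iff)
  have "0 < card P" using finite_P P_nonempty by (simp add: card_gt_0_iff)
  then have rate: "0 < error_rate"
    unfolding error_rate_def using K_pos \<beta>_pos N by (simp add: N_def)
  have \<rho>: "0 < \<rho>" "\<rho> \<le> 1 / 2" "2 * \<rho> < \<epsilon>"
    unfolding \<rho>_def using assms by auto
  have \<eta>: "0 < \<eta>" "\<eta> \<le> 1" "error_rate * (N * \<eta>) \<le> \<rho> / 2"
    unfolding \<eta>_def using \<rho> rate N by (auto simp: min_mult_distrib_left field_simps min_le_iff_disj)
  have "0 < \<delta>"
    unfolding \<delta>_def using \<beta>_pos K_pos N \<eta> \<rho> rate by auto
  show ?thesis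
  proof (intro exI[of _ \<delta>] conjI allI impI \<open>0 < \<delta>\<close>)
    fix M f assume "0 < M \<and> M < \<delta> \<and> wardrop_eq P pe c M f"
    then have M: "0 < M" "M < \<delta>" and eq: "wardrop_eq P pe c M f" by auto
    have M_small: "M \<le> 1" "2 * K * M \<le> \<beta>" "4 * K * N * M < \<beta> * \<eta> ^ game_order"
      "error_rate * M \<le> \<rho> / 2"
      using M(2) K_pos N rate unfolding \<delta>_def by (auto simp: field_simps)
    interpret small_equilibrium E P pe c Z k b \<beta> K M f \<eta>
      using eq M(1) M_small \<eta> by unfold_locales (auto simp: N_def)
    have small: "error_rate * (M + card E * \<eta>) \<le> \<rho>"
      using M_small(4) \<eta>(3) by (simp add: N_def algebra_simps)
    have "\<bar>poa E P pe c M f - 1\<bar> \<le> 2 * (error_rate * (M + card E * \<eta>))"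
      using social_cost_le_mult_error small \<rho>(2) rate M(1) \<eta>(1)
      by (intro poa_deviation_le[OF feasible cost_nonneg]) auto
    then show "\<bar>poa E P pe c M f - 1\<bar> < \<epsilon>" using small \<rho> by linarith
  qed
qed

end

section \<open>Polynomial costs\<close>

lemma polys_uniform_leading_terms:
  fixes cp :: "'e \<Rightarrow> real poly"
  assumes "finite A" "A \<noteq> {}" "\<And>e. e \<in> A \<Longrightarrow> cp e \<noteq> 0"
    and nonneg: "\<And>e x. e \<in> A \<Longrightarrow> 0 \<le> x \<Longrightarrow> 0 \<le> poly (cp e) x"
  obtains k b \<beta> K where "0 < \<beta>" "\<And>e. e \<in> A \<Longrightarrow> \<beta> \<le> b e \<and> b e \<le> K"
    "\<And>e x. e \<in> A \<Longrightarrow> 0 \<le> x \<Longrightarrow> x \<le> 1 \<Longrightarrow> \<bar>poly (cp e) x - b e * x ^ k e\<bar> \<le> K * x ^ (k e + 1)"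
proof -
  define expansion where "expansion e t \<longleftrightarrow> 0 < fst (snd t) \<and> 0 \<le> snd (snd t) \<and>
    (\<forall>x. 0 \<le> x \<longrightarrow> x \<le> 1 \<longrightarrow> \<bar>poly (cp e) x - fst (snd t) * x ^ fst t\<bar> \<le> snd (snd t) * x ^ (fst t + 1))"
    for e and t :: "nat \<times> real \<times> real"
  have "\<forall>e\<in>A. \<exists>t. expansion e t"
  proof
    fix e assume "e \<in> A"
    with assms(3) nonneg have "cp e \<noteq> 0" "\<And>x. 0 \<le> x \<Longrightarrow> 0 \<le> poly (cp e) x" by auto
    then show "\<exists>t. expansion e t"
    proof (rule poly_nonneg_leading_term)
      fix b K k
      assume "0 < b" "0 \<le> K"
        "\<And>x. 0 \<le> x \<Longrightarrow> x \<le> 1 \<Longrightarrow> \<bar>poly (cp e) x - b * x ^ k\<bar> \<le> K * x ^ (k + 1)"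
      then show ?thesis unfolding expansion_def by (intro exI[of _ "(k, b, K)"]) auto
    qed
  qed
  then obtain t where t: "\<forall>e\<in>A. expansion e (t e)"
    by (rule bchoice[THEN exE])
  define k where "k e = fst (t e)" for e
  define b where "b e = fst (snd (t e))" for e
  define K where "K = Max ((\<lambda>e. max (b e) (snd (snd (t e)))) ` A)"
  show ?thesis
  proof (rule that[of "Min (b ` A)" b K k])
    show "0 < Min (b ` A)" unfolding b_def using assms(1,2) t by (subst Min_gr_iff) (simp_all add: expansion_def)
    fix e assume e: "e \<in> A"
    have K_ge: "max (b e) (snd (snd (t e))) \<le> K"
      unfolding K_def using assms(1) e by (intro Max_ge) auto
    then show "Min (b ` A) \<le> b e \<and> b e \<le> K"
      using assms(1) e by simp
    fix x :: real assume x: "0 \<le> x" "x \<le> 1"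
    from K_ge have "snd (snd (t e)) * x ^ (k e + 1) \<le> K * x ^ (k e + 1)"
      using x by (intro mult_right_mono) auto
    moreover have "\<bar>poly (cp e) x - b e * x ^ k e\<bar> \<le> snd (snd (t e)) * x ^ (k e + 1)"
      using t e x unfolding expansion_def b_def k_def by blast
    ultimately show "\<bar>poly (cp e) x - b e * x ^ k e\<bar> \<le> K * x ^ (k e + 1)" by linarith
  qed
qed

lemma polynomial_leading_term_costs:
  fixes cp :: "'e \<Rightarrow> real poly"
  assumes "finite E" "finite P" "P \<noteq> {}" "\<forall>p\<in>P. pe p \<subseteq> E"
    and nonneg: "\<forall>e\<in>E. \<forall>x\<ge>0. poly (cp e) x \<ge> 0"
    and not_free: "\<And>p. p \<in> P \<Longrightarrow> \<not> pe p \<subseteq> {e\<in>E. cp e = 0}"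
  obtains k b \<beta> K where "leading_term_costs E P pe (\<lambda>e. poly (cp e)) {e\<in>E. cp e = 0} k b \<beta> K"
proof -
  let ?Z = "{e\<in>E. cp e = 0}"
  obtain p where "p \<in> P" using assms(3) by blast
  then have "E - ?Z \<noteq> {}" using not_free assms(4) by blast
  show ?thesis
  proof (rule polys_uniform_leading_terms[of "E - ?Z" cp])
    fix k b \<beta> K
    assume "0 < \<beta>" "\<And>e. e \<in> E - ?Z \<Longrightarrow> \<beta> \<le> b e \<and> b e \<le> K"
      "\<And>e x. e \<in> E - ?Z \<Longrightarrow> 0 \<le> x \<Longrightarrow> x \<le> 1 \<Longrightarrow> \<bar>poly (cp e) x - b e * x ^ k e\<bar> \<le> K * x ^ (k e + 1)"
    then show thesis
      by (intro that[of k b \<beta> K] leading_term_costs.intro) (use assms not_free in auto)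
  qed (use assms(1) nonneg \<open>E - ?Z \<noteq> {}\<close> in auto)
qed

theorem corollary4p5:
  fixes E :: "'e set" and P :: "'p set" and pe :: "'p \<Rightarrow> 'e set"
    and cp :: "'e \<Rightarrow> real poly"
  assumes "finite E" and "finite P" and "P \<noteq> {}"
    and "\<forall>p\<in>P. pe p \<subseteq> E"
    and "\<forall>e\<in>E. \<forall>x\<ge>0. poly (cp e) x \<ge> 0"
    and "\<forall>e\<in>E. \<forall>x y. 0 \<le> x \<and> x \<le> y \<longrightarrow> poly (cp e) x \<le> poly (cp e) y"
  shows "\<forall>\<epsilon>>0. \<exists>\<delta>>0. \<forall>M f. 0 < M \<and> M < \<delta> \<and>
            wardrop_eq P pe (\<lambda>e. poly (cp e)) M f \<longrightarrow>
            \<bar>poa E P pe (\<lambda>e. poly (cp e)) M f - 1\<bar> < \<epsilon>"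
proof (intro allI impI)
  fix \<epsilon> :: real assume "0 < \<epsilon>"
  show "\<exists>\<delta>>0. \<forall>M f. 0 < M \<and> M < \<delta> \<and> wardrop_eq P pe (\<lambda>e. poly (cp e)) M f \<longrightarrow>
          \<bar>poa E P pe (\<lambda>e. poly (cp e)) M f - 1\<bar> < \<epsilon>"
  proof (cases "\<exists>p\<in>P. pe p \<subseteq> {e\<in>E. cp e = 0}")
    case True
    then obtain p where "p \<in> P" "pe p \<subseteq> {e\<in>E. cp e = 0}" by blast
    then have "poa E P pe (\<lambda>e. poly (cp e)) M f = 1" if "wardrop_eq P pe (\<lambda>e. poly (cp e)) M f" for M f
      using assms(5) by (intro wardrop_poa_eq_1_if_free_path[OF that assms(1,2,4)]) auto
    with \<open>0 < \<epsilon>\<close> show ?thesis by (intro exI[of _ 1]) auto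
  next
    case False
    then obtain k b \<beta> K
      where "leading_term_costs E P pe (\<lambda>e. poly (cp e)) {e\<in>E. cp e = 0} k b \<beta> K"
      using polynomial_leading_term_costs[OF assms(1-5)] by blast
    then show ?thesis using leading_term_costs.poa_tends_to_1 \<open>0 < \<epsilon>\<close> by blast
  qed
qed

end
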